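(* Let $(\Omega,\mathcal{F},\mathbb{P})$ be an atomless probability space, $\mathrm{B}_b$ the space of bounded real-valued measurable functions on $\Omega$, and $H\colon\mathrm{B}_b\to\mathbb{R}$ a law-invariant premium principle, i.e. $H(X)=H(Y)$ whenever $X,Y\in\mathrm{B}_b$ have the same distribution function under $\mathbb{P}$. Then $R_{\mathrm{Max}}(X):=\inf\{H(X_0)\mid X_0\in\mathrm{B}_b,\ X_0\ge X\}$ is law-invariant.
   Context: A premium principle is a map $H\colon\mathrm{B}_b\to\mathbb{R}$ with $H(X+m)=H(X)+m$ for $m\in\mathbb{R}$, $H(0)=0$, and $H(X)\ge0$ for $X\ge0$, where $\le$ is the pointwise order. The distribution function of $X$ is $z\mapsto\mathbb{P}(X\le z)$. *)

theory Defs
  imports "HOL-Probability.Probability"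
begin

definition atomless :: "'a measure \<Rightarrow> bool" where
  "atomless M \<longleftrightarrow> (\<forall>A\<in>sets M. measure M A > 0 \<longrightarrow>
      (\<exists>B\<in>sets M. B \<subseteq> A \<and> 0 < measure M B \<and> measure M B < measure M A))"

definition Bb :: "'a measure \<Rightarrow> ('a \<Rightarrow> real) set" where
  "Bb M = {X. X \<in> borel_measurable M \<and> bounded (X ` space M)}"

definition distr_fun :: "'a measure \<Rightarrow> ('a \<Rightarrow> real) \<Rightarrow> real \<Rightarrow> real" where
  "distr_fun M X z = measure M {\<omega>\<in>space M. X \<omega> \<le> z}"

definition premium_principle :: "'a measure \<Rightarrow> (('a \<Rightarrow> real) \<Rightarrow> real) \<Rightarrow> bool" where
  "premium_principle M H \<longleftrightarrow>
     (\<forall>X\<in>Bb M. \<forall>m::real. H (\<lambda>\<omega>. X \<omega> + m) = H X + m) \<and>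
     H (\<lambda>_. 0) = 0 \<and>
     (\<forall>X\<in>Bb M. (\<forall>\<omega>\<in>space M. X \<omega> \<ge> 0) \<longrightarrow> H X \<ge> 0)"

definition law_invariant :: "'a measure \<Rightarrow> (('a \<Rightarrow> real) \<Rightarrow> real) \<Rightarrow> bool" where
  "law_invariant M H \<longleftrightarrow>
     (\<forall>X\<in>Bb M. \<forall>Y\<in>Bb M. distr_fun M X = distr_fun M Y \<longrightarrow> H X = H Y)"

definition R_Max :: "'a measure \<Rightarrow> (('a \<Rightarrow> real) \<Rightarrow> real) \<Rightarrow> ('a \<Rightarrow> real) \<Rightarrow> real" where
  "R_Max M H X = Inf {H X0 | X0. X0 \<in> Bb M \<and> (\<forall>\<omega>\<in>space M. X0 \<omega> \<ge> X \<omega>)}"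

end

(*
  If X and Y have the same law, then every bounded X0 \<ge> X has a counterpart Y0 \<ge> Y with the
  same law as X0; law invariance of H gives H X0 = H Y0, so the two sets whose infima define
  R_Max coincide.  To build Y0, note that the law of X0 is stochastically larger than that of Y.
  On an atomless space, Sierpinski's intermediate value theorem yields nested sets B_t of
  measure t squeezed between {Y < q_Y(t)} and {Y \<le> q_Y(t)}, for the dyadic t in [0, 1].
  The first level U(\<omega>) = inf {t. \<omega> \<in> B_t} is uniformly distributed and satisfies
  Y \<le> q_Y(U) \<le> q_X0(U), so Y0 = q_X0(U) does the job.
*)

theory Submission
  imports Defs
begin

section \<open>Atomless measure spaces\<close>

context finite_measure
begin

lemma atomless_exists_half_subset:
  assumes "atomless M" "A \<in> sets M" "0 < measure M A"
  obtains B where "B \<in> sets M" "B \<subseteq> A" "0 < measure M B" "measure M B \<le> measure M A / 2"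
proof -
  obtain C where C: "C \<in> sets M" "C \<subseteq> A" "0 < measure M C" "measure M C < measure M A"
    using assms unfolding atomless_def by blast
  have "measure M (A - C) = measure M A - measure M C"
    using assms(2) C by (simp add: finite_measure_Diff)
  show thesis
  proof (cases "measure M C \<le> measure M A / 2")
    case True
    then show thesis by (rule that[OF C(1,2,3)])
  next
    case False
    then show thesis using that[of "A - C"] assms(2) C \<open>measure M (A - C) = _\<close> by auto
  qed
qed

lemma atomless_exists_small_subset:
  assumes "atomless M" "A \<in> sets M" "0 < measure M A" "0 < e"
  obtains B where "B \<in> sets M" "B \<subseteq> A" "0 < measure M B" "measure M B < e"
proof -
  have "\<exists>B\<in>sets M. B \<subseteq> A \<and> 0 < measure M B \<and> measure M B \<le> measure M A / 2 ^ n" for n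
  proof (induction n)
    case 0
    then show ?case using assms by auto
  next
    case (Suc n)
    then obtain B where B: "B \<in> sets M" "B \<subseteq> A" "0 < measure M B" "measure M B \<le> measure M A / 2 ^ n"
      by blast
    obtain C where "C \<in> sets M" "C \<subseteq> B" "0 < measure M C" "measure M C \<le> measure M B / 2"
      using atomless_exists_half_subset[OF assms(1) B(1,3)] .
    with B show ?case by (intro bexI[of _ C]) auto
  qed
  moreover obtain n where "(1 / 2) ^ n < e / measure M A"
    using real_arch_pow_inv[of "e / measure M A" "1 / 2"] assms by auto
  then have "measure M A / 2 ^ n < e"
    using assms by (simp add: field_simps)
  ultimately show thesis
    using that by (meson le_less_trans)
qed

lemma exists_greedy_increment:
  assumes "C \<in> sets M" "measure M C \<le> t"
  shows "\<exists>D. D \<in> sets M \<and> D \<subseteq> A - C \<and> measure M C + measure M D \<le> t \<and>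
    (\<forall>E\<in>sets M. E \<subseteq> A - C \<longrightarrow> measure M C + measure M E \<le> t \<longrightarrow> measure M E \<le> 2 * measure M D)"
proof -
  define adm where "adm = {E \<in> sets M. E \<subseteq> A - C \<and> measure M C + measure M E \<le> t}"
  have "{} \<in> adm" using assms by (simp add: adm_def)
  have bdd: "bdd_above (measure M ` adm)"
    by (rule bdd_aboveI[of _ "measure M (space M)"]) (auto simp: adm_def bounded_measure)
  have upper: "measure M E \<le> Sup (measure M ` adm)" if "E \<in> adm" for E
    using that bdd by (simp add: cSup_upper)
  show ?thesis
  proof (cases "Sup (measure M ` adm) \<le> 0")
    case True
    then show ?thesis using \<open>{} \<in> adm\<close> upper unfolding adm_def by (intro exI[of _ "{}"]) force
  next
    case False
    then obtain D where "D \<in> adm" "Sup (measure M ` adm) / 2 < measure M D"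
      using less_cSup_iff[OF _ bdd, of "Sup (measure M ` adm) / 2"] \<open>{} \<in> adm\<close> by force
    then show ?thesis using upper unfolding adm_def by (intro exI[of _ D]) force
  qed
qed

lemma exists_greedy_chain:
  assumes "A \<in> sets M" "0 \<le> t"
  obtains C where "\<And>n. C n \<in> sets M" "\<And>n. C n \<subseteq> A" "\<And>n. measure M (C n) \<le> t" "incseq C"
    "\<And>n E. E \<in> sets M \<Longrightarrow> E \<subseteq> A - C n \<Longrightarrow> measure M (C n) + measure M E \<le> t \<Longrightarrow>
      measure M E \<le> 2 * (measure M (C (Suc n)) - measure M (C n))"
proof -
  define adm where "adm C \<longleftrightarrow> C \<in> sets M \<and> C \<subseteq> A \<and> measure M C \<le> t" for C
  define greedy where "greedy C D \<longleftrightarrow> D \<in> sets M \<and> D \<subseteq> A - C \<and> measure M C + measure M D \<le> t \<and>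
    (\<forall>E\<in>sets M. E \<subseteq> A - C \<longrightarrow> measure M C + measure M E \<le> t \<longrightarrow> measure M E \<le> 2 * measure M D)" for C D
  define inc where "inc C = (SOME D. greedy C D)" for C
  have "greedy C (inc C)" if "adm C" for C
    unfolding inc_def
    by (rule someI_ex) (use exists_greedy_increment that in \<open>simp add: greedy_def adm_def\<close>)
  then have inc_sets: "inc C \<in> sets M" and inc_sub: "inc C \<subseteq> A - C"
    and inc_le: "measure M C + measure M (inc C) \<le> t"
    and inc_large: "\<And>E. E \<in> sets M \<Longrightarrow> E \<subseteq> A - C \<Longrightarrow> measure M C + measure M E \<le> t \<Longrightarrow>
      measure M E \<le> 2 * measure M (inc C)"
    if "adm C" for C
    using that unfolding greedy_def by blast+
  define C where "C n = ((\<lambda>X. X \<union> inc X) ^^ n) {}" for n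
  have C_Suc: "C (Suc n) = C n \<union> inc (C n)" for n by (simp add: C_def)
  have measure_C_Suc: "measure M (C (Suc n)) = measure M (C n) + measure M (inc (C n))"
    if "adm (C n)" for n
    unfolding C_Suc using that inc_sets[OF that] inc_sub[OF that]
    by (intro finite_measure_Union) (auto simp: adm_def)
  have adm_C: "adm (C n)" for n
  proof (induction n)
    case 0
    show ?case using assms by (simp add: C_def adm_def)
  next
    case (Suc n)
    then show ?case using measure_C_Suc[OF Suc] inc_sets[OF Suc] inc_sub[OF Suc] inc_le[OF Suc]
      by (auto simp: adm_def C_Suc)
  qed
  show thesis
  proof (rule that)
    show "C n \<in> sets M" "C n \<subseteq> A" "measure M (C n) \<le> t" for n
      using adm_C by (simp_all add: adm_def)
    show "incseq C" by (rule incseq_SucI) (simp add: C_Suc)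
    show "measure M E \<le> 2 * (measure M (C (Suc n)) - measure M (C n))"
      if "E \<in> sets M" "E \<subseteq> A - C n" "measure M (C n) + measure M E \<le> t" for n E
      using inc_large[OF adm_C that] measure_C_Suc[OF adm_C] by simp
  qed
qed

text \<open>Sierpinski's theorem: if the union of the greedy chain fell short of \<open>t\<close>, a small subset
  of the remainder would force every increment of the chain to be at least half its measure.\<close>

lemma atomless_exists_subset_measure:
  assumes "atomless M" "A \<in> sets M" "0 \<le> t" "t \<le> measure M A"
  obtains B where "B \<in> sets M" "B \<subseteq> A" "measure M B = t"
proof -
  obtain C where C: "\<And>n. C n \<in> sets M" "\<And>n. C n \<subseteq> A" "\<And>n. measure M (C n) \<le> t" "incseq C"
    and greedy: "\<And>n E. E \<in> sets M \<Longrightarrow> E \<subseteq> A - C n \<Longrightarrow> measure M (C n) + measure M E \<le> t \<Longrightarrow>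
      measure M E \<le> 2 * (measure M (C (Suc n)) - measure M (C n))"
    using exists_greedy_chain[OF assms(2,3)] by blast
  define B where "B = (\<Union>n. C n)"
  have B: "B \<in> sets M" "B \<subseteq> A" using C by (auto simp: B_def)
  have "(\<lambda>n. measure M (C n)) \<longlonglongrightarrow> measure M B"
    unfolding B_def using C by (intro finite_Lim_measure_incseq) auto
  then have "measure M B \<le> t" by (rule LIMSEQ_le_const2) (use C in auto)
  moreover have "\<not> measure M B < t"
  proof
    assume "measure M B < t"
    moreover have "measure M (A - B) = measure M A - measure M B"
      using assms(2) B by (simp add: finite_measure_Diff)
    ultimately obtain E where E: "E \<in> sets M" "E \<subseteq> A - B" "0 < measure M E" "measure M E < t - measure M B"
      using atomless_exists_small_subset[OF assms(1), of "A - B" "t - measure M B"] assms B by auto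
    have increment: "measure M E \<le> 2 * (measure M (C (Suc n)) - measure M (C n))" for n
    proof (rule greedy)
      have "C n \<subseteq> B" by (auto simp: B_def)
      then show "E \<subseteq> A - C n" using E(2) by blast
      have "measure M (C n) \<le> measure M B" using \<open>C n \<subseteq> B\<close> B(1) by (rule finite_measure_mono)
      then show "measure M (C n) + measure M E \<le> t" using E(4) by linarith
    qed (rule E(1))
    have "real n * (measure M E / 2) \<le> measure M (C n)" for n
    proof (induction n)
      case (Suc n)
      then show ?case using increment[of n] by (simp add: algebra_simps)
    qed simp
    moreover obtain n where "measure M (space M) < real n * (measure M E / 2)"
      using reals_Archimedean3[of "measure M E / 2"] E by (meson half_gt_zero)
    ultimately show False using bounded_measure[of "C n"] by (meson leD order.trans)
  qed
  ultimately show thesis using that[OF B] by linarith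
qed

lemma atomless_exists_measure_between:
  assumes "atomless M" "L \<in> sets M" "U \<in> sets M" "L \<subseteq> U" "measure M L \<le> t" "t \<le> measure M U"
  obtains B where "B \<in> sets M" "L \<subseteq> B" "B \<subseteq> U" "measure M B = t"
proof -
  have "measure M (U - L) = measure M U - measure M L"
    using assms by (simp add: finite_measure_Diff)
  then obtain D where D: "D \<in> sets M" "D \<subseteq> U - L" "measure M D = t - measure M L"
    using atomless_exists_subset_measure[OF assms(1), of "U - L" "t - measure M L"] assms by auto
  have "measure M (L \<union> D) = measure M L + measure M D"
    using assms D by (intro finite_measure_Union) auto
  then show thesis using that[of "L \<union> D"] assms D by auto
qed

end

section \<open>Distribution and quantile functions\<close>

lemma borel_measurable_Bb: "X \<in> Bb M \<Longrightarrow> X \<in> borel_measurable M"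
  by (simp add: Bb_def)

lemma Bb_boundedE:
  assumes "X \<in> Bb M"
  obtains c where "\<And>\<omega>. \<omega> \<in> space M \<Longrightarrow> \<bar>X \<omega>\<bar> \<le> c"
  using assms unfolding Bb_def bounded_real by blast

text \<open>The right-continuous quantile function. It is only meaningful for \<open>0 \<le> u < 1\<close>:
  otherwise the infimum is taken over an empty or unbounded set.\<close>

definition quantile :: "'a measure \<Rightarrow> ('a \<Rightarrow> real) \<Rightarrow> real \<Rightarrow> real" where
  "quantile M X u = Inf {y. u < distr_fun M X y}"

context prob_space
begin

lemma distr_fun_eq_cdf:
  assumes "X \<in> borel_measurable M"
  shows "distr_fun M X = cdf (distr M borel X)"
  using assms by (auto simp: fun_eq_iff distr_fun_def cdf_def measure_distr vimage_def Int_def conj_commute)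

lemma distr_fun_mono:
  assumes "X \<in> borel_measurable M" "y \<le> z"
  shows "distr_fun M X y \<le> distr_fun M X z"
proof -
  interpret D: real_distribution "distr M borel X" using assms(1) by simp
  show ?thesis using assms D.cdf_nondecreasing by (simp add: distr_fun_eq_cdf)
qed

lemma distr_fun_le_1: "distr_fun M X y \<le> 1"
  by (simp add: distr_fun_def)

lemma measure_less_le_if_distr_fun_le:
  assumes "X \<in> borel_measurable M" "\<And>y. y < z \<Longrightarrow> distr_fun M X y \<le> u"
  shows "measure M {\<omega>\<in>space M. X \<omega> < z} \<le> u"
proof -
  interpret D: real_distribution "distr M borel X" using assms(1) by simp
  have "measure M {\<omega>\<in>space M. X \<omega> < z} = measure (distr M borel X) {..<z}"
    using assms(1) by (simp add: measure_distr vimage_def Int_def conj_commute)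
  moreover have "(cdf (distr M borel X) \<longlongrightarrow> measure (distr M borel X) {..<z}) (at_left z)"
    by (rule D.cdf_at_left)
  moreover have "eventually (\<lambda>y. cdf (distr M borel X) y \<le> u) (at_left z)"
    using assms by (auto simp: eventually_at_left_field distr_fun_eq_cdf intro: exI[of _ "z - 1"])
  ultimately show ?thesis by (simp add: tendsto_upperbound)
qed

lemma distr_fun_eq_1_if_bound_le:
  assumes "\<And>\<omega>. \<omega> \<in> space M \<Longrightarrow> \<bar>X \<omega>\<bar> \<le> c" "c \<le> y"
  shows "distr_fun M X y = 1"
proof -
  have "{\<omega>\<in>space M. X \<omega> \<le> y} = space M" using assms by force
  then show ?thesis by (simp add: distr_fun_def prob_space)
qed

lemma distr_fun_eq_0_if_less_bound:
  assumes "\<And>\<omega>. \<omega> \<in> space M \<Longrightarrow> \<bar>X \<omega>\<bar> \<le> c" "y < - c"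
  shows "distr_fun M X y = 0"
proof -
  have "{\<omega>\<in>space M. X \<omega> \<le> y} = {}" using assms by force
  then show ?thesis unfolding distr_fun_def by (metis measure_empty)
qed

context
  fixes X assumes X: "X \<in> Bb M"
begin

lemma quantile_bounds:
  assumes "\<And>\<omega>. \<omega> \<in> space M \<Longrightarrow> \<bar>X \<omega>\<bar> \<le> c" "0 \<le> u" "u < 1"
  shows "{y. u < distr_fun M X y} \<noteq> {}" "bdd_below {y. u < distr_fun M X y}"
    and "- c \<le> quantile M X u" "quantile M X u \<le> c"
proof -
  have lower: "- c \<le> y" if "u < distr_fun M X y" for y
    using that assms distr_fun_eq_0_if_less_bound[OF assms(1), where y = y] by force
  have "c \<in> {y. u < distr_fun M X y}"
    using assms distr_fun_eq_1_if_bound_le[OF assms(1)] by simp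
  then show ne: "{y. u < distr_fun M X y} \<noteq> {}" by blast
  show bdd: "bdd_below {y. u < distr_fun M X y}"
    using lower by (intro bdd_belowI) blast
  show "- c \<le> quantile M X u"
    unfolding quantile_def using lower by (intro cInf_greatest[OF ne]) blast
  show "quantile M X u \<le> c"
    unfolding quantile_def by (rule cInf_lower[OF \<open>c \<in> _\<close> bdd])
qed

lemma quantile_le:
  assumes "0 \<le> u" "u < distr_fun M X y"
  shows "quantile M X u \<le> y"
proof -
  obtain c where c: "\<And>\<omega>. \<omega> \<in> space M \<Longrightarrow> \<bar>X \<omega>\<bar> \<le> c" using Bb_boundedE[OF X] by blast
  have "u < 1" using assms distr_fun_le_1[of X y] by linarith
  then show ?thesis
    unfolding quantile_def using assms quantile_bounds(2)[OF c] by (intro cInf_lower) auto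
qed

lemma le_quantileI:
  assumes "0 \<le> u" "u < 1" "\<And>y. u < distr_fun M X y \<Longrightarrow> a \<le> y"
  shows "a \<le> quantile M X u"
proof -
  obtain c where c: "\<And>\<omega>. \<omega> \<in> space M \<Longrightarrow> \<bar>X \<omega>\<bar> \<le> c" using Bb_boundedE[OF X] by blast
  show ?thesis
    unfolding quantile_def using assms quantile_bounds(1)[OF c] by (intro cInf_greatest) auto
qed

lemma le_distr_fun_quantile:
  assumes "0 \<le> u" "u < 1"
  shows "u \<le> distr_fun M X (quantile M X u)"
proof -
  obtain c where c: "\<And>\<omega>. \<omega> \<in> space M \<Longrightarrow> \<bar>X \<omega>\<bar> \<le> c" using Bb_boundedE[OF X] by blast
  interpret D: real_distribution "distr M borel X" using borel_measurable_Bb[OF X] by simp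
  let ?S = "{y. u < distr_fun M X y}"
  have "distr_fun M X (Inf ?S) = Inf (distr_fun M X ` ?S)"
    unfolding distr_fun_eq_cdf[OF borel_measurable_Bb[OF X]]
    using quantile_bounds[OF c assms] distr_fun_eq_cdf[OF borel_measurable_Bb[OF X]]
    by (intro continuous_at_Inf_mono D.cdf_is_right_cont monoI D.cdf_nondecreasing) auto
  also have "u \<le> Inf (distr_fun M X ` ?S)"
    using quantile_bounds[OF c assms] by (intro cInf_greatest) auto
  finally show ?thesis unfolding quantile_def by simp
qed

lemma measure_less_quantile:
  assumes "0 \<le> u" "u < 1"
  shows "measure M {\<omega>\<in>space M. X \<omega> < quantile M X u} \<le> u"
  using borel_measurable_Bb[OF X]
proof (rule measure_less_le_if_distr_fun_le)
  show "distr_fun M X y \<le> u" if "y < quantile M X u" for y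
    using quantile_le[of u y] assms that by linarith
qed

lemma quantile_mono: "mono_on {0..<1} (quantile M X)"
proof (rule mono_onI)
  fix u v :: real assume "u \<in> {0..<1}" "v \<in> {0..<1}" "u \<le> v"
  moreover obtain c where c: "\<And>\<omega>. \<omega> \<in> space M \<Longrightarrow> \<bar>X \<omega>\<bar> \<le> c" using Bb_boundedE[OF X] by blast
  ultimately show "quantile M X u \<le> quantile M X v"
    unfolding quantile_def using quantile_bounds(1,2)[OF c] by (intro cInf_superset_mono) auto
qed

end

lemma distr_fun_le_if_le:
  assumes "X \<in> borel_measurable M" "\<And>\<omega>. \<omega> \<in> space M \<Longrightarrow> X \<omega> \<le> X' \<omega>"
  shows "distr_fun M X' z \<le> distr_fun M X z"
  unfolding distr_fun_def using assms by (intro finite_measure_mono) force+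

lemma borel_measurable_quantile_transform:
  assumes Z: "Z \<in> Bb M" and U: "U \<in> borel_measurable M" "\<And>\<omega>. \<omega> \<in> space M \<Longrightarrow> 0 \<le> U \<omega>"
    and V: "V \<in> borel_measurable M"
  shows "(\<lambda>\<omega>. if U \<omega> < 1 then quantile M Z (U \<omega>) else V \<omega>) \<in> borel_measurable M"
proof -
  have "U \<in> measurable (restrict_space M {\<omega>. U \<omega> < 1}) (restrict_space borel {0..<1})"
    using U by (intro measurable_restrict_space1 measurable_restrict_space2) (auto simp: space_restrict_space)
  moreover have "quantile M Z \<in> borel_measurable (restrict_space borel {0..<1})"
    by (rule borel_measurable_mono_on_fnc[OF quantile_mono[OF Z]])
  ultimately have "(\<lambda>\<omega>. quantile M Z (U \<omega>)) \<in> borel_measurable (restrict_space M {\<omega>. U \<omega> < 1})"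
    by (rule measurable_compose)
  moreover have "{\<omega>\<in>space M. U \<omega> < 1} \<in> sets M" using U by measurable
  ultimately show ?thesis
    using V by (subst measurable_If_restrict_space_iff) (auto intro: measurable_restrict_space1)
qed

lemma distr_fun_quantile_transform:
  assumes Z: "Z \<in> Bb M" and U: "U \<in> borel_measurable M" and V: "V \<in> borel_measurable M"
    and U_less: "\<And>c. 0 \<le> c \<Longrightarrow> c \<le> 1 \<Longrightarrow> measure M {\<omega>\<in>space M. U \<omega> < c} = c"
    and U_le: "\<And>c. 0 \<le> c \<Longrightarrow> c \<le> 1 \<Longrightarrow> measure M {\<omega>\<in>space M. U \<omega> \<le> c} = c"
    and V_eq: "\<And>\<omega>. \<omega> \<in> space M \<Longrightarrow> U \<omega> < 1 \<Longrightarrow> V \<omega> = quantile M Z (U \<omega>)"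
  shows "distr_fun M V = distr_fun M Z"
proof
  fix z
  let ?G = "distr_fun M Z z"
  have G: "0 \<le> ?G" "?G \<le> 1" by (simp_all add: distr_fun_def)
  have "AE \<omega> in M. \<omega> \<in> {\<omega>\<in>space M. U \<omega> < 1}"
    using U_less[of 1] by (intro AE_prob_1) simp
  moreover have "AE \<omega> in M. \<omega> \<notin> {\<omega>\<in>space M. U \<omega> < 0}"
    using U_less[of 0] U by (subst prob_eq_0[symmetric]) simp_all
  ultimately have AE_V: "AE \<omega> in M. 0 \<le> U \<omega> \<and> U \<omega> < 1 \<and> V \<omega> = quantile M Z (U \<omega>)"
    by eventually_elim (use V_eq in auto)
  have "AE \<omega> in M. U \<omega> < ?G \<longrightarrow> V \<omega> \<le> z"
    using AE_V by eventually_elim (auto intro: quantile_le[OF Z])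
  then have "measure M {\<omega>\<in>space M. U \<omega> < ?G} \<le> distr_fun M V z"
    unfolding distr_fun_def using V by (intro finite_measure_mono_AE) auto
  moreover have "AE \<omega> in M. V \<omega> \<le> z \<longrightarrow> U \<omega> \<le> ?G"
    using AE_V
  proof eventually_elim
    case (elim \<omega>)
    show ?case
    proof
      assume "V \<omega> \<le> z"
      have "U \<omega> \<le> distr_fun M Z (quantile M Z (U \<omega>))"
        using elim by (intro le_distr_fun_quantile[OF Z]) auto
      also have "\<dots> \<le> ?G"
        using elim \<open>V \<omega> \<le> z\<close> borel_measurable_Bb[OF Z] by (intro distr_fun_mono) auto
      finally show "U \<omega> \<le> ?G" .
    qed
  qed
  then have "distr_fun M V z \<le> measure M {\<omega>\<in>space M. U \<omega> \<le> ?G}"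
    unfolding distr_fun_def using U by (intro finite_measure_mono_AE) auto
  ultimately show "distr_fun M V z = ?G"
    using U_less[OF G] U_le[OF G] by linarith
qed

end

section \<open>Level sets and the distributional transform\<close>

text \<open>At \<open>t = 0\<close> and \<open>t = 1\<close> the quantile gives no information (a junk value at \<open>1\<close>, and
  \<open>{Y < quantile M Y 0}\<close> may be a nonempty null set), so the extreme level sets are fixed
  as \<open>{}\<close> and \<open>space M\<close>.\<close>

definition level_set :: "'a measure \<Rightarrow> ('a \<Rightarrow> real) \<Rightarrow> real \<Rightarrow> 'a set \<Rightarrow> bool" where
  "level_set M Y t B \<longleftrightarrow> B \<in> sets M \<and> measure M B = t \<and> (t = 0 \<longrightarrow> B = {}) \<and> (t = 1 \<longrightarrow> B = space M) \<and>
     (0 < t \<and> t < 1 \<longrightarrow>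
       {\<omega>\<in>space M. Y \<omega> < quantile M Y t} \<subseteq> B \<and> B \<subseteq> {\<omega>\<in>space M. Y \<omega> \<le> quantile M Y t})"

locale atomless_prob_space = prob_space +
  assumes atomless: "atomless M"

primrec dyadic_level_set :: "'a measure \<Rightarrow> ('a \<Rightarrow> real) \<Rightarrow> nat \<Rightarrow> nat \<Rightarrow> 'a set" where
  "dyadic_level_set M Y 0 k = (if k = 0 then {} else space M)"
| "dyadic_level_set M Y (Suc n) k =
    (if even k then dyadic_level_set M Y n (k div 2)
     else (SOME B. level_set M Y (real k / 2 ^ Suc n) B \<and>
       dyadic_level_set M Y n (k div 2) \<subseteq> B \<and> B \<subseteq> dyadic_level_set M Y n (Suc (k div 2))))"

declare dyadic_level_set.simps(2) [simp del]

lemma dyadic_level_set_even: "dyadic_level_set M Y (Suc n) (2 * k) = dyadic_level_set M Y n k"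
  by (simp add: dyadic_level_set.simps(2))

lemma dyadic_level_set_odd: "dyadic_level_set M Y (Suc n) (2 * k + 1) =
  (SOME B. level_set M Y (real (2 * k + 1) / 2 ^ Suc n) B \<and>
    dyadic_level_set M Y n k \<subseteq> B \<and> B \<subseteq> dyadic_level_set M Y n (Suc k))"
  by (simp add: dyadic_level_set.simps(2))

lemma dyadic_level_set_refine: "dyadic_level_set M Y (n + d) (k * 2 ^ d) = dyadic_level_set M Y n k"
proof (induction d)
  case (Suc d)
  have "dyadic_level_set M Y (n + Suc d) (k * 2 ^ Suc d) = dyadic_level_set M Y (Suc (n + d)) (2 * (k * 2 ^ d))"
    by (simp add: ac_simps)
  then show ?case using Suc by (simp only: dyadic_level_set_even)
qed simp

lemma exists_dyadic_between:
  fixes a b :: real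
  assumes "0 \<le> a" "a < b" "b \<le> 1"
  obtains n k where "k \<le> 2 ^ n" "a < real k / 2 ^ n" "real k / 2 ^ n < b"
proof -
  obtain n where n: "(1 / 2) ^ n < b - a"
    using real_arch_pow_inv[of "b - a" "1 / 2"] assms by auto
  define k where "k = nat \<lfloor>a * 2 ^ n\<rfloor> + 1"
  have k: "real k = real_of_int \<lfloor>a * 2 ^ n\<rfloor> + 1" using assms by (simp add: k_def)
  have "a * 2 ^ n < real k" using k real_of_int_floor_add_one_gt[of "a * 2 ^ n"] by linarith
  then have lower: "a < real k / 2 ^ n" by (simp add: field_simps)
  have "real k \<le> a * 2 ^ n + 1" using k of_int_floor_le[of "a * 2 ^ n"] by linarith
  also have "\<dots> < b * 2 ^ n" using n by (simp add: field_simps power_one_over)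
  finally have "real k < b * 2 ^ n" .
  then have upper: "real k / 2 ^ n < b" by (simp add: field_simps)
  have "b * 2 ^ n \<le> 1 * 2 ^ n" using assms by (intro mult_right_mono) auto
  then have "real k < 2 ^ n" using \<open>real k < b * 2 ^ n\<close> by linarith
  then have "k \<le> 2 ^ n" by (metis less_imp_le of_nat_less_iff of_nat_numeral of_nat_power)
  then show thesis using that lower upper by blast
qed

definition distributional_transform :: "'a measure \<Rightarrow> ('a \<Rightarrow> real) \<Rightarrow> 'a \<Rightarrow> real" where
  "distributional_transform M Y \<omega> =
    Inf {real k / 2 ^ n | n k. k \<le> 2 ^ n \<and> \<omega> \<in> dyadic_level_set M Y n k}"

context atomless_prob_space
begin

context
  fixes Y assumes Y: "Y \<in> Bb M"
begin

lemma level_set_below: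
  assumes "level_set M Y s B" "0 \<le> s" "s < t" "t < 1"
  shows "B \<subseteq> {\<omega>\<in>space M. Y \<omega> \<le> quantile M Y t}"
    and "measure M (B \<union> {\<omega>\<in>space M. Y \<omega> < quantile M Y t}) \<le> t"
proof -
  let ?S = "{\<omega>\<in>space M. Y \<omega> < quantile M Y t}"
  have q: "quantile M Y s \<le> quantile M Y t"
    using assms by (simp add: mono_onD[OF quantile_mono[OF Y]])
  have "measure M B = s" and B_0: "s = 0 \<Longrightarrow> B = {}"
    and B_level: "s \<noteq> 0 \<Longrightarrow>
      {\<omega>\<in>space M. Y \<omega> < quantile M Y s} \<subseteq> B \<and> B \<subseteq> {\<omega>\<in>space M. Y \<omega> \<le> quantile M Y s}"
    using assms by (auto simp: level_set_def)
  then show "B \<subseteq> {\<omega>\<in>space M. Y \<omega> \<le> quantile M Y t}"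
    using q by (cases "s = 0") auto
  have "B \<union> ?S = ?S \<or> B \<union> ?S = B"
  proof (cases "s \<noteq> 0 \<and> quantile M Y s = quantile M Y t")
    case True
    then show ?thesis using B_level by auto
  next
    case False
    then have "B \<subseteq> ?S" using B_0 B_level q by (cases "s = 0") fastforce+
    then show ?thesis by blast
  qed
  moreover have "measure M ?S \<le> t"
    using measure_less_quantile[OF Y] assms by simp
  ultimately show "measure M (B \<union> ?S) \<le> t"
    using \<open>measure M B = s\<close> \<open>s < t\<close> by auto
qed

lemma level_set_above:
  assumes "level_set M Y r B" "0 < t" "t < r" "r \<le> 1"
  shows "{\<omega>\<in>space M. Y \<omega> < quantile M Y t} \<subseteq> B"
    and "t \<le> measure M (B \<inter> {\<omega>\<in>space M. Y \<omega> \<le> quantile M Y t})"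
proof -
  let ?L = "{\<omega>\<in>space M. Y \<omega> \<le> quantile M Y t}"
  have q: "r < 1 \<Longrightarrow> quantile M Y t \<le> quantile M Y r"
    using assms by (simp add: mono_onD[OF quantile_mono[OF Y]])
  have "measure M B = r" and B_1: "r = 1 \<Longrightarrow> B = space M"
    and B_level: "r \<noteq> 1 \<Longrightarrow>
      {\<omega>\<in>space M. Y \<omega> < quantile M Y r} \<subseteq> B \<and> B \<subseteq> {\<omega>\<in>space M. Y \<omega> \<le> quantile M Y r}"
    using assms by (auto simp: level_set_def)
  then show "{\<omega>\<in>space M. Y \<omega> < quantile M Y t} \<subseteq> B"
    using q \<open>r \<le> 1\<close> by (cases "r = 1") auto
  have "B \<inter> ?L = ?L \<or> B \<inter> ?L = B"
  proof (cases "r \<noteq> 1 \<and> quantile M Y t = quantile M Y r")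
    case True
    then show ?thesis using B_level by auto
  next
    case False
    then have "?L \<subseteq> B" using B_1 B_level q \<open>r \<le> 1\<close> by (cases "r = 1") fastforce+
    then show ?thesis by blast
  qed
  moreover have "t \<le> measure M ?L"
    using le_distr_fun_quantile[OF Y] assms by (simp add: distr_fun_def)
  ultimately show "t \<le> measure M (B \<inter> ?L)"
    using \<open>measure M B = r\<close> \<open>t < r\<close> by auto
qed

lemma exists_level_set_between:
  assumes Bs: "level_set M Y s Bs" and Br: "level_set M Y r Br" and "Bs \<subseteq> Br"
    and "0 \<le> s" "s < t" "t < r" "r \<le> 1"
  obtains B where "level_set M Y t B" "Bs \<subseteq> B" "B \<subseteq> Br"
proof -
  let ?S = "{\<omega>\<in>space M. Y \<omega> < quantile M Y t}" and ?L = "{\<omega>\<in>space M. Y \<omega> \<le> quantile M Y t}"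
  have t: "0 < t" "t < 1" using assms by linarith+
  note below = level_set_below[OF Bs \<open>0 \<le> s\<close> \<open>s < t\<close> \<open>t < 1\<close>]
  note above = level_set_above[OF Br \<open>0 < t\<close> \<open>t < r\<close> \<open>r \<le> 1\<close>]
  have "?S \<subseteq> ?L" by auto
  then have sub: "Bs \<union> ?S \<subseteq> Br \<inter> ?L"
    using below(1) above(1) \<open>Bs \<subseteq> Br\<close> by blast
  have "Bs \<in> sets M" "Br \<in> sets M" using Bs Br by (simp_all add: level_set_def)
  moreover have "?S \<in> sets M" "?L \<in> sets M" using borel_measurable_Bb[OF Y] by simp_all
  ultimately have sets: "Bs \<union> ?S \<in> sets M" "Br \<inter> ?L \<in> sets M" by auto
  obtain B where B: "B \<in> sets M" "Bs \<union> ?S \<subseteq> B" "B \<subseteq> Br \<inter> ?L" "measure M B = t"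
    by (rule atomless_exists_measure_between[OF atomless sets sub below(2) above(2)])
  have "level_set M Y t B"
    unfolding level_set_def using B t by auto
  then show thesis
    using that B by blast
qed

lemma level_set_dyadic_level_set_odd:
  assumes "level_set M Y (real k / 2 ^ n) (dyadic_level_set M Y n k)"
    and "level_set M Y (real (Suc k) / 2 ^ n) (dyadic_level_set M Y n (Suc k))"
    and "dyadic_level_set M Y n k \<subseteq> dyadic_level_set M Y n (Suc k)" "k < 2 ^ n"
  shows "level_set M Y (real (2 * k + 1) / 2 ^ Suc n) (dyadic_level_set M Y (Suc n) (2 * k + 1)) \<and>
    dyadic_level_set M Y n k \<subseteq> dyadic_level_set M Y (Suc n) (2 * k + 1) \<and>
    dyadic_level_set M Y (Suc n) (2 * k + 1) \<subseteq> dyadic_level_set M Y n (Suc k)"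
proof -
  have "real (Suc k) \<le> 2 ^ n" using \<open>k < 2 ^ n\<close>
    by (metis Suc_leI of_nat_le_iff of_nat_numeral of_nat_power)
  then have le_1: "real (Suc k) / 2 ^ n \<le> 1" by simp
  have lt_1: "real k / 2 ^ n < real (2 * k + 1) / 2 ^ Suc n"
    and lt_2: "real (2 * k + 1) / 2 ^ Suc n < real (Suc k) / 2 ^ n"
    by (simp_all add: field_simps)
  obtain B where "level_set M Y (real (2 * k + 1) / 2 ^ Suc n) B"
      "dyadic_level_set M Y n k \<subseteq> B" "B \<subseteq> dyadic_level_set M Y n (Suc k)"
    using exists_level_set_between[OF assms(1-3) _ lt_1 lt_2 le_1] by force
  then have "\<exists>B. level_set M Y (real (2 * k + 1) / 2 ^ Suc n) B \<and>
      dyadic_level_set M Y n k \<subseteq> B \<and> B \<subseteq> dyadic_level_set M Y n (Suc k)"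
    by blast
  from someI_ex[OF this] show ?thesis
    unfolding dyadic_level_set_odd .
qed

lemma level_set_dyadic_level_set_all:
  "(\<forall>k\<le>2 ^ n. level_set M Y (real k / 2 ^ n) (dyadic_level_set M Y n k)) \<and>
   (\<forall>k<2 ^ n. dyadic_level_set M Y n k \<subseteq> dyadic_level_set M Y n (Suc k))"
proof (induction n)
  case 0
  have "k \<le> 1 \<Longrightarrow> k = 0 \<or> k = 1" for k :: nat by auto
  then show ?case by (auto simp: level_set_def prob_space)
next
  case (Suc n)
  have odd: "level_set M Y (real (2 * k + 1) / 2 ^ Suc n) (dyadic_level_set M Y (Suc n) (2 * k + 1)) \<and>
      dyadic_level_set M Y n k \<subseteq> dyadic_level_set M Y (Suc n) (2 * k + 1) \<and>
      dyadic_level_set M Y (Suc n) (2 * k + 1) \<subseteq> dyadic_level_set M Y n (Suc k)" if "k < 2 ^ n" for k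
    using that Suc.IH[THEN conjunct1, rule_format, of k] Suc.IH[THEN conjunct1, rule_format, of "Suc k"]
      Suc.IH[THEN conjunct2, rule_format, of k]
    by (intro level_set_dyadic_level_set_odd) simp_all
  have "level_set M Y (real j / 2 ^ Suc n) (dyadic_level_set M Y (Suc n) j)" if "j \<le> 2 ^ Suc n" for j
  proof (cases "even j")
    case True
    then obtain k where "j = 2 * k" by blast
    moreover have "real (2 * k) / 2 ^ Suc n = real k / 2 ^ n" by simp
    ultimately show ?thesis using Suc that by (simp add: dyadic_level_set_even)
  next
    case False
    then obtain k where "j = 2 * k + 1" using oddE by blast
    then show ?thesis using odd[of k] that by simp
  qed
  moreover have "dyadic_level_set M Y (Suc n) j \<subseteq> dyadic_level_set M Y (Suc n) (Suc j)" if "j < 2 ^ Suc n" for j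
  proof (cases "even j")
    case True
    then obtain k where "j = 2 * k" by blast
    then show ?thesis using odd[of k] that by (simp add: dyadic_level_set_even)
  next
    case False
    then obtain k where "j = 2 * k + 1" using oddE by blast
    moreover have "Suc (2 * k + 1) = 2 * Suc k" by simp
    ultimately show ?thesis using odd[of k] that by (simp only: dyadic_level_set_even) simp
  qed
  ultimately show ?case by blast
qed

lemma level_set_dyadic_level_set: "k \<le> 2 ^ n \<Longrightarrow> level_set M Y (real k / 2 ^ n) (dyadic_level_set M Y n k)"
  using level_set_dyadic_level_set_all by blast

lemma dyadic_level_set_mono:
  assumes "k \<le> j" "j \<le> 2 ^ n"
  shows "dyadic_level_set M Y n k \<subseteq> dyadic_level_set M Y n j"
  using assms
proof (induction j)
  case (Suc j)
  show ?case
  proof (cases "k = Suc j")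
    case False
    then have "dyadic_level_set M Y n k \<subseteq> dyadic_level_set M Y n j" using Suc by simp
    also have "\<dots> \<subseteq> dyadic_level_set M Y n (Suc j)"
      using level_set_dyadic_level_set_all[of n] Suc.prems by simp
    finally show ?thesis .
  qed simp
qed simp

lemma dyadic_level_set_subset:
  assumes "real k / 2 ^ n \<le> real j / 2 ^ m" "k \<le> 2 ^ n" "j \<le> 2 ^ m"
  shows "dyadic_level_set M Y n k \<subseteq> dyadic_level_set M Y m j"
proof -
  have "real (k * 2 ^ m) \<le> real (j * 2 ^ n)" using assms(1) by (simp add: field_simps)
  then have "k * 2 ^ m \<le> j * 2 ^ n" by (simp only: of_nat_le_iff)
  moreover have "j * 2 ^ n \<le> 2 ^ (m + n)" using assms(3) by (simp add: power_add)
  ultimately have "dyadic_level_set M Y (n + m) (k * 2 ^ m) \<subseteq> dyadic_level_set M Y (m + n) (j * 2 ^ n)"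
    by (simp add: add.commute dyadic_level_set_mono)
  then show ?thesis by (simp only: dyadic_level_set_refine)
qed

lemma dyadic_level_set_sets: "k \<le> 2 ^ n \<Longrightarrow> dyadic_level_set M Y n k \<in> sets M"
  and measure_dyadic_level_set: "k \<le> 2 ^ n \<Longrightarrow> measure M (dyadic_level_set M Y n k) = real k / 2 ^ n"
  using level_set_dyadic_level_set by (simp_all add: level_set_def)

lemma distributional_transform_le:
  assumes "k \<le> 2 ^ n" "\<omega> \<in> dyadic_level_set M Y n k"
  shows "distributional_transform M Y \<omega> \<le> real k / 2 ^ n"
  unfolding distributional_transform_def
  by (rule cInf_lower) (use assms in \<open>auto intro: bdd_belowI[of _ 0]\<close>)

lemma distributional_transform_less_iff:
  assumes "\<omega> \<in> space M"
  shows "distributional_transform M Y \<omega> < c \<longleftrightarrow>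
    (\<exists>n k. k \<le> 2 ^ n \<and> \<omega> \<in> dyadic_level_set M Y n k \<and> real k / 2 ^ n < c)"
proof
  let ?S = "{real k / 2 ^ n | n k. k \<le> 2 ^ n \<and> \<omega> \<in> dyadic_level_set M Y n k}"
  have "1 \<in> ?S" using assms by (intro CollectI exI[of _ "0::nat"] exI[of _ "1::nat"]) simp
  moreover have "bdd_below ?S" by (intro bdd_belowI[of _ 0]) auto
  moreover assume "distributional_transform M Y \<omega> < c"
  ultimately show "\<exists>n k. k \<le> 2 ^ n \<and> \<omega> \<in> dyadic_level_set M Y n k \<and> real k / 2 ^ n < c"
    unfolding distributional_transform_def by (subst (asm) cInf_less_iff) blast+
next
  assume "\<exists>n k. k \<le> 2 ^ n \<and> \<omega> \<in> dyadic_level_set M Y n k \<and> real k / 2 ^ n < c"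
  then show "distributional_transform M Y \<omega> < c"
    using distributional_transform_le by (meson le_less_trans)
qed

lemma distributional_transform_nonneg:
  assumes "\<omega> \<in> space M"
  shows "0 \<le> distributional_transform M Y \<omega>"
proof (rule ccontr)
  assume "\<not> 0 \<le> distributional_transform M Y \<omega>"
  then obtain n k :: nat where "real k / 2 ^ n < 0"
    using distributional_transform_less_iff[OF assms, of 0] by auto
  moreover have "0 \<le> real k / 2 ^ n" by simp
  ultimately show False by linarith
qed

lemma distributional_transform_le_1: "\<omega> \<in> space M \<Longrightarrow> distributional_transform M Y \<omega> \<le> 1"
  using distributional_transform_le[of 1 0 \<omega>] by simp

lemma borel_measurable_distributional_transform:
  "distributional_transform M Y \<in> borel_measurable M"
  unfolding borel_measurable_iff_less
proof
  fix c
  have "{\<omega>\<in>space M. distributional_transform M Y \<omega> < c} =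
    (\<Union>(n, k)\<in>{(n, k). k \<le> 2 ^ n \<and> real k / 2 ^ n < c}. dyadic_level_set M Y n k)"
  proof (intro set_eqI iffI)
    fix \<omega> assume "\<omega> \<in> {\<omega>\<in>space M. distributional_transform M Y \<omega> < c}"
    then show "\<omega> \<in> (\<Union>(n, k)\<in>{(n, k). k \<le> 2 ^ n \<and> real k / 2 ^ n < c}. dyadic_level_set M Y n k)"
      using distributional_transform_less_iff by blast
  next
    fix \<omega> assume "\<omega> \<in> (\<Union>(n, k)\<in>{(n, k). k \<le> 2 ^ n \<and> real k / 2 ^ n < c}. dyadic_level_set M Y n k)"
    then obtain n k where "k \<le> 2 ^ n" "\<omega> \<in> dyadic_level_set M Y n k" "real k / 2 ^ n < c" by blast
    moreover from this have "\<omega> \<in> space M"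
      using dyadic_level_set_sets sets.sets_into_space by blast
    ultimately show "\<omega> \<in> {\<omega>\<in>space M. distributional_transform M Y \<omega> < c}"
      using distributional_transform_less_iff by blast
  qed
  also have "\<dots> \<in> sets M"
    by (intro sets.countable_UN'') (auto intro: dyadic_level_set_sets)
  finally show "{\<omega>\<in>space M. distributional_transform M Y \<omega> < c} \<in> sets M" .
qed

lemma le_if_distributional_transform_less:
  assumes "\<omega> \<in> space M" "distributional_transform M Y \<omega> < distr_fun M Y y"
  shows "Y \<omega> \<le> y"
proof -
  obtain n k where nk: "k \<le> 2 ^ n" "\<omega> \<in> dyadic_level_set M Y n k" "real k / 2 ^ n < distr_fun M Y y"
    using assms distributional_transform_less_iff by blast
  have level: "level_set M Y (real k / 2 ^ n) (dyadic_level_set M Y n k)"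
    using level_set_dyadic_level_set[OF nk(1)] .
  have "k \<noteq> 0"
  proof
    assume "k = 0"
    then have "dyadic_level_set M Y n k = {}" using level by (simp add: level_set_def)
    with nk(2) show False by simp
  qed
  then have "0 < real k / 2 ^ n" by simp
  moreover have "real k / 2 ^ n < 1" using nk(3) distr_fun_le_1[of Y y] by linarith
  ultimately have "Y \<omega> \<le> quantile M Y (real k / 2 ^ n)"
    using nk(2) level by (auto simp: level_set_def)
  also have "\<dots> \<le> y" using quantile_le[OF Y _ nk(3)] by simp
  finally show ?thesis .
qed

lemma le_measure_distributional_transform_less:
  assumes "0 \<le> c" "c \<le> 1"
  shows "c \<le> measure M {\<omega>\<in>space M. distributional_transform M Y \<omega> < c}"
proof (rule field_le_epsilon)
  fix e :: real assume "0 < e"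
  let ?A = "{\<omega>\<in>space M. distributional_transform M Y \<omega> < c}"
  show "c \<le> measure M ?A + e"
  proof (cases "c \<le> e")
    case True
    then show ?thesis using measure_nonneg[of M ?A] by linarith
  next
    case False
    obtain n k where nk: "k \<le> 2 ^ n" "c - e < real k / 2 ^ n" "real k / 2 ^ n < c"
      by (rule exists_dyadic_between[of "c - e" c]) (use False \<open>0 < e\<close> assms in auto)
    have "dyadic_level_set M Y n k \<subseteq> ?A"
      using nk dyadic_level_set_sets[OF nk(1)] sets.sets_into_space distributional_transform_le[OF nk(1)]
      by fastforce
    then have "measure M (dyadic_level_set M Y n k) \<le> measure M ?A"
      using borel_measurable_distributional_transform by (intro finite_measure_mono) auto
    then show ?thesis using measure_dyadic_level_set[OF nk(1)] nk(2) by linarith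
  qed
qed

lemma measure_distributional_transform_le_le:
  assumes "0 \<le> c" "c < 1"
  shows "measure M {\<omega>\<in>space M. distributional_transform M Y \<omega> \<le> c} \<le> c"
proof (rule field_le_epsilon)
  fix e :: real assume "0 < e"
  let ?A = "{\<omega>\<in>space M. distributional_transform M Y \<omega> \<le> c}"
  obtain m j where mj: "j \<le> 2 ^ m" "c < real j / 2 ^ m" "real j / 2 ^ m < min (c + e) 1"
    by (rule exists_dyadic_between[of c "min (c + e) 1"]) (use \<open>0 < e\<close> assms in auto)
  have "?A \<subseteq> dyadic_level_set M Y m j"
  proof
    fix \<omega> assume "\<omega> \<in> ?A"
    then obtain n k where "k \<le> 2 ^ n" "\<omega> \<in> dyadic_level_set M Y n k" "real k / 2 ^ n < real j / 2 ^ m"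
      using distributional_transform_less_iff[of \<omega> "real j / 2 ^ m"] mj(2) by auto
    then show "\<omega> \<in> dyadic_level_set M Y m j"
      using dyadic_level_set_subset[OF _ _ mj(1)] by (meson less_imp_le subsetD)
  qed
  then have "measure M ?A \<le> measure M (dyadic_level_set M Y m j)"
    using dyadic_level_set_sets[OF mj(1)] by (intro finite_measure_mono)
  then show "measure M ?A \<le> c + e"
    using measure_dyadic_level_set[OF mj(1)] mj(3) by linarith
qed

lemma measure_distributional_transform_less:
  assumes "0 \<le> c" "c \<le> 1"
  shows "measure M {\<omega>\<in>space M. distributional_transform M Y \<omega> < c} = c"
proof -
  have "measure M {\<omega>\<in>space M. distributional_transform M Y \<omega> < c} \<le> c"
  proof (cases "c = 1")
    case False
    then have "measure M {\<omega>\<in>space M. distributional_transform M Y \<omega> < c} \<le>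
        measure M {\<omega>\<in>space M. distributional_transform M Y \<omega> \<le> c}"
      using borel_measurable_distributional_transform by (intro finite_measure_mono) auto
    also have "\<dots> \<le> c" using False assms by (intro measure_distributional_transform_le_le) auto
    finally show ?thesis .
  qed simp
  then show ?thesis using le_measure_distributional_transform_less[OF assms] by linarith
qed

lemma measure_distributional_transform_le:
  assumes "0 \<le> c" "c \<le> 1"
  shows "measure M {\<omega>\<in>space M. distributional_transform M Y \<omega> \<le> c} = c"
proof (cases "c = 1")
  case True
  then have "{\<omega>\<in>space M. distributional_transform M Y \<omega> \<le> c} = space M"
    using distributional_transform_le_1 by auto
  then show ?thesis using True prob_space by simp
next
  case False
  have "c = measure M {\<omega>\<in>space M. distributional_transform M Y \<omega> < c}"
    using measure_distributional_transform_less[OF assms] by simp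
  also have "\<dots> \<le> measure M {\<omega>\<in>space M. distributional_transform M Y \<omega> \<le> c}"
    using borel_measurable_distributional_transform by (intro finite_measure_mono) auto
  finally show ?thesis
    using measure_distributional_transform_le_le False assms by fastforce
qed

end

end

section \<open>Dominating variables with a prescribed law\<close>

context atomless_prob_space
begin

lemma exists_dominating_with_distr_fun:
  assumes Y: "Y \<in> Bb M" and Z: "Z \<in> Bb M" and dom: "\<And>z. distr_fun M Z z \<le> distr_fun M Y z"
  obtains Y' where "Y' \<in> Bb M" "\<And>\<omega>. \<omega> \<in> space M \<Longrightarrow> Y \<omega> \<le> Y' \<omega>" "distr_fun M Y' = distr_fun M Z"
proof -
  define U where "U = distributional_transform M Y"
  define Y' where "Y' \<omega> = (if U \<omega> < 1 then quantile M Z (U \<omega>) else Y \<omega>)" for \<omega>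
  have U: "U \<in> borel_measurable M" "\<And>\<omega>. \<omega> \<in> space M \<Longrightarrow> 0 \<le> U \<omega>"
    unfolding U_def using borel_measurable_distributional_transform[OF Y] distributional_transform_nonneg[OF Y]
    by auto
  have "Y \<omega> \<le> quantile M Z (U \<omega>)" if "\<omega> \<in> space M" "U \<omega> < 1" for \<omega>
    using U(2)[OF that(1)] that dom le_if_distributional_transform_less[OF Y]
    by (intro le_quantileI[OF Z]) (auto simp: U_def intro: less_le_trans)
  then have Y_le: "\<And>\<omega>. \<omega> \<in> space M \<Longrightarrow> Y \<omega> \<le> Y' \<omega>" by (simp add: Y'_def)
  have Y'_meas: "Y' \<in> borel_measurable M"
    unfolding Y'_def using Z U borel_measurable_Bb[OF Y] by (rule borel_measurable_quantile_transform)
  obtain cY where cY: "\<And>\<omega>. \<omega> \<in> space M \<Longrightarrow> \<bar>Y \<omega>\<bar> \<le> cY" using Bb_boundedE[OF Y] by blast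
  obtain cZ where cZ: "\<And>\<omega>. \<omega> \<in> space M \<Longrightarrow> \<bar>Z \<omega>\<bar> \<le> cZ" using Bb_boundedE[OF Z] by blast
  have "\<bar>Y' \<omega>\<bar> \<le> max cY cZ" if "\<omega> \<in> space M" for \<omega>
    using cY[OF that] quantile_bounds(3,4)[OF Z cZ, of "U \<omega>"] U(2)[OF that] by (auto simp: Y'_def)
  then have "Y' \<in> Bb M"
    using Y'_meas unfolding Bb_def bounded_real by blast
  moreover have "distr_fun M Y' = distr_fun M Z"
    using Z U(1) Y'_meas measure_distributional_transform_less[OF Y] measure_distributional_transform_le[OF Y]
    by (intro distr_fun_quantile_transform) (auto simp: U_def Y'_def)
  ultimately show thesis using that Y_le by blast
qed

lemma law_invariant_dominating_values_subset:
  assumes "law_invariant M H" "X \<in> Bb M" "Y \<in> Bb M" "distr_fun M X = distr_fun M Y"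
  shows "{H X0 |X0. X0 \<in> Bb M \<and> (\<forall>\<omega>\<in>space M. X0 \<omega> \<ge> X \<omega>)} \<subseteq>
    {H Y0 |Y0. Y0 \<in> Bb M \<and> (\<forall>\<omega>\<in>space M. Y0 \<omega> \<ge> Y \<omega>)}"
proof safe
  fix X0 assume X0: "X0 \<in> Bb M" "\<forall>\<omega>\<in>space M. X \<omega> \<le> X0 \<omega>"
  have "distr_fun M X0 z \<le> distr_fun M Y z" for z
    using distr_fun_le_if_le[OF borel_measurable_Bb[OF assms(2)]] X0 assms(4) by metis
  then obtain Y0 where "Y0 \<in> Bb M" "\<And>\<omega>. \<omega> \<in> space M \<Longrightarrow> Y \<omega> \<le> Y0 \<omega>" "distr_fun M Y0 = distr_fun M X0"
    using exists_dominating_with_distr_fun[OF assms(3) X0(1)] by blast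
  moreover from this have "H X0 = H Y0"
    using assms(1) X0(1) unfolding law_invariant_def by metis
  ultimately show "\<exists>Y0. H X0 = H Y0 \<and> Y0 \<in> Bb M \<and> (\<forall>\<omega>\<in>space M. Y \<omega> \<le> Y0 \<omega>)" by blast
qed

end

theorem proposition4p3:
  fixes M :: "'a measure" and H :: "('a \<Rightarrow> real) \<Rightarrow> real"
  assumes "prob_space M"
    and "atomless M"
    and "premium_principle M H"
    and "law_invariant M H"
  shows "law_invariant M (R_Max M H)"
proof -
  interpret atomless_prob_space M
    using assms(1,2) by (simp add: atomless_prob_space_def atomless_prob_space_axioms_def)
  show ?thesis
    unfolding law_invariant_def
  proof (intro ballI impI)
    fix X Y assume X: "X \<in> Bb M" and Y: "Y \<in> Bb M" and XY: "distr_fun M X = distr_fun M Y"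
    have "{H X0 |X0. X0 \<in> Bb M \<and> (\<forall>\<omega>\<in>space M. X0 \<omega> \<ge> X \<omega>)} =
        {H Y0 |Y0. Y0 \<in> Bb M \<and> (\<forall>\<omega>\<in>space M. Y0 \<omega> \<ge> Y \<omega>)}"
      using law_invariant_dominating_values_subset[OF assms(4) X Y XY] law_invariant_dominating_values_subset[OF assms(4) Y X XY[symmetric]]
      by (rule subset_antisym)
    then show "R_Max M H X = R_Max M H Y"
      unfolding R_Max_def by simp
  qed
qed

end
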